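(* Let $G$ be a connected graph and $r\in\mathbb{N}$. Then the $r$-local covering $p_r:G_r\to G$ preserves $(r/2)$-balls.
   Context: Graphs may have loops and parallel edges and are viewed as 1-complexes; a cycle may be a loop or a pair of parallel edges; a closed walk once around a cycle $O$ traverses every edge of $O$ exactly once. $\pi_1^r(G,x_0)$ is the subgroup of $\pi_1(G,x_0)$ generated by the classes of the closed walks $W_0QW_0^-$, with $W_0$ a walk from $x_0$ to a vertex $y$, $Q$ a closed walk at $y$ once around a cycle of length at most $r$, $W_0^-$ the reverse of $W_0$. The $r$-local covering $p_r:G_r\to G$ is the connected normal covering with characteristic subgroup $\pi_1^r(G,x_0)$. For $\varrho\in\mathbb{N}$ and a vertex $v$ of a graph $X$, the ball $B_X(v,\varrho/2)$ is the subgraph formed by the vertices at distance at most $\varrho/2$ from $v$ and all edges $xy$ with $d_X(v,x)+1+d_X(y,v)\le\varrho$. A covering $p:C\to G$ preserves $(\varrho/2)$-balls if for every vertex $v$ of $G$ and every lift $\hat v$ of $v$, $p$ maps $B_C(\hat v,\varrho/2)$ isomorphically onto $B_G(v,\varrho/2)$. *)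

theory Defs
  imports Main
begin

text \<open>A graph has a vertex set, an edge set, and every edge is given an
(arbitrary, auxiliary) orientation by src/tgt.  Loops (src e = tgt e) and
parallel edges are allowed.\<close>

record ('v, 'e) graph =
  gverts :: "'v set"
  gedges :: "'e set"
  gsrc   :: "'e \<Rightarrow> 'v"
  gtgt   :: "'e \<Rightarrow> 'v"

definition wf_graph :: "('v, 'e, 'x) graph_scheme \<Rightarrow> bool" where
  "wf_graph G \<longleftrightarrow> (\<forall>e \<in> gedges G. gsrc G e \<in> gverts G \<and> gtgt G e \<in> gverts G)"

type_synonym 'e dart = "'e \<times> bool"

definition dstart :: "('v, 'e, 'x) graph_scheme \<Rightarrow> 'e dart \<Rightarrow> 'v" where
  "dstart G d = (if snd d then gsrc G (fst d) else gtgt G (fst d))"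

definition dend :: "('v, 'e, 'x) graph_scheme \<Rightarrow> 'e dart \<Rightarrow> 'v" where
  "dend G d = (if snd d then gtgt G (fst d) else gsrc G (fst d))"

definition flip :: "'e dart \<Rightarrow> 'e dart" where
  "flip d = (fst d, \<not> snd d)"

fun walk :: "('v, 'e, 'x) graph_scheme \<Rightarrow> 'v \<Rightarrow> 'e dart list \<Rightarrow> 'v \<Rightarrow> bool" where
  "walk G x [] y \<longleftrightarrow> x \<in> gverts G \<and> x = y"
| "walk G x (d # W) y \<longleftrightarrow> fst d \<in> gedges G \<and> dstart G d = x \<and> x \<in> gverts G
                           \<and> walk G (dend G d) W y"

definition rev_walk :: "'e dart list \<Rightarrow> 'e dart list" where
  "rev_walk W = rev (map flip W)"

definition connected_graph :: "('v, 'e, 'x) graph_scheme \<Rightarrow> bool" where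
  "connected_graph G \<longleftrightarrow> gverts G \<noteq> {} \<and>
     (\<forall>x \<in> gverts G. \<forall>y \<in> gverts G. \<exists>W. walk G x W y)"

text \<open>Homotopy
classes of walks in a graph (viewed as a 1-complex) correspond bijectively to
reduced walks; the class of W is represented by reduce W, and the product of
classes [a][b] is reduce (a @ b).\<close>

fun reduce :: "'e dart list \<Rightarrow> 'e dart list" where
  "reduce [] = []"
| "reduce (d # W) = (case reduce W of
                        [] \<Rightarrow> [d]
                      | d' # R \<Rightarrow> if d' = flip d then R else d # d' # R)"

definition pi1 :: "('v, 'e, 'x) graph_scheme \<Rightarrow> 'v \<Rightarrow> 'e dart list set" where
  "pi1 G x0 = {reduce W | W. walk G x0 W x0}"

text \<open>Q is a closed walk at y once around a cycle (a loop, a pair of parallel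
edges, or a longer cycle): it is nonempty, closed, uses each of its edges once
and visits each of its vertices once.\<close>
definition once_around_cycle :: "('v, 'e, 'x) graph_scheme \<Rightarrow> 'v \<Rightarrow> 'e dart list \<Rightarrow> bool" where
  "once_around_cycle G y Q \<longleftrightarrow> Q \<noteq> [] \<and> walk G y Q y \<and>
     distinct (map fst Q) \<and> distinct (map (dstart G) Q)"

definition local_gens :: "('v, 'e, 'x) graph_scheme \<Rightarrow> nat \<Rightarrow> 'v \<Rightarrow> 'e dart list set" where
  "local_gens G r x0 = {W0 @ Q @ rev_walk W0 | W0 Q y.
       walk G x0 W0 y \<and> once_around_cycle G y Q \<and> length Q \<le> r}"

inductive_set gen_subgroup :: "'e dart list set \<Rightarrow> 'e dart list set"
  for S :: "'e dart list set" where
  gen: "g \<in> S \<Longrightarrow> reduce g \<in> gen_subgroup S"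
| one: "[] \<in> gen_subgroup S"
| mult: "a \<in> gen_subgroup S \<Longrightarrow> b \<in> gen_subgroup S \<Longrightarrow> reduce (a @ b) \<in> gen_subgroup S"
| inv: "a \<in> gen_subgroup S \<Longrightarrow> rev_walk a \<in> gen_subgroup S"

definition pi1_r :: "('v, 'e, 'x) graph_scheme \<Rightarrow> nat \<Rightarrow> 'v \<Rightarrow> 'e dart list set" where
  "pi1_r G r x0 = gen_subgroup (local_gens G r x0)"

definition map_dart :: "('ce \<Rightarrow> 'e) \<Rightarrow> 'ce dart \<Rightarrow> 'e dart" where
  "map_dart pe d = (pe (fst d), snd d)"

definition darts_at :: "('v, 'e, 'x) graph_scheme \<Rightarrow> 'v \<Rightarrow> 'e dart set" where
  "darts_at G v = {d. fst d \<in> gedges G \<and> dstart G d = v}"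

definition covering ::
  "('cv, 'ce, 'x) graph_scheme \<Rightarrow> ('v, 'e, 'y) graph_scheme \<Rightarrow> ('cv \<Rightarrow> 'v) \<Rightarrow> ('ce \<Rightarrow> 'e) \<Rightarrow> bool" where
  "covering C G pv pe \<longleftrightarrow>
     pv ` gverts C = gverts G \<and> pe ` gedges C \<subseteq> gedges G \<and>
     (\<forall>e \<in> gedges C. pv (gsrc C e) = gsrc G (pe e) \<and> pv (gtgt C e) = gtgt G (pe e)) \<and>
     (\<forall>c \<in> gverts C. bij_betw (map_dart pe) (darts_at C c) (darts_at G (pv c)))"

definition induced_subgroup ::
  "('cv, 'ce, 'x) graph_scheme \<Rightarrow> ('ce \<Rightarrow> 'e) \<Rightarrow> 'cv \<Rightarrow> 'e dart list set" where
  "induced_subgroup C pe c0 = {reduce (map (map_dart pe) W) | W. walk C c0 W c0}"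

definition gdist :: "('v, 'e, 'x) graph_scheme \<Rightarrow> 'v \<Rightarrow> 'v \<Rightarrow> nat" where
  "gdist X u v = (LEAST n. \<exists>W. walk X u W v \<and> length W = n)"

definition ball :: "('v, 'e, 'x) graph_scheme \<Rightarrow> 'v \<Rightarrow> nat \<Rightarrow> ('v, 'e) graph" where
  "ball X v \<rho> = \<lparr> gverts = {x \<in> gverts X. 2 * gdist X v x \<le> \<rho>},
                  gedges = {e \<in> gedges X. gdist X v (gsrc X e) + 1 + gdist X (gtgt X e) v \<le> \<rho>},
                  gsrc = gsrc X, gtgt = gtgt X \<rparr>"

definition graph_iso ::
  "('cv, 'ce, 'x) graph_scheme \<Rightarrow> ('v, 'e, 'y) graph_scheme \<Rightarrow> ('cv \<Rightarrow> 'v) \<Rightarrow> ('ce \<Rightarrow> 'e) \<Rightarrow> bool" where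
  "graph_iso X Y f g \<longleftrightarrow> bij_betw f (gverts X) (gverts Y) \<and> bij_betw g (gedges X) (gedges Y) \<and>
     (\<forall>e \<in> gedges X. f (gsrc X e) = gsrc Y (g e) \<and> f (gtgt X e) = gtgt Y (g e))"

definition preserves_balls ::
  "('cv, 'ce, 'x) graph_scheme \<Rightarrow> ('v, 'e, 'y) graph_scheme \<Rightarrow> ('cv \<Rightarrow> 'v) \<Rightarrow> ('ce \<Rightarrow> 'e) \<Rightarrow> nat \<Rightarrow> bool" where
  "preserves_balls C G pv pe \<rho> \<longleftrightarrow>
     (\<forall>v \<in> gverts G. \<forall>v' \<in> gverts C. pv v' = v \<longrightarrow> graph_iso (ball C v' \<rho>) (ball G v \<rho>) pv pe)"

end

theory Submission
  imports Defs
begin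

text \<open>A closed walk of length at most \<open>r\<close>, conjugated to the base point, is a product of
the generators of \<open>\<pi>\<^sub>1\<^sup>r\<close>: cancel a backtrack, or split at a repeated vertex into two
shorter closed walks, until a cycle of length at most \<open>r\<close> remains.  As \<open>\<pi>\<^sub>1\<^sup>r\<close> is the
characteristic subgroup of the covering, every closed walk of length at most \<open>r\<close> lifts to
closed walks.  Hence two walks from a lift \<open>v'\<close> of \<open>v\<close> of total length at most \<open>r\<close> whose
ends lie over the same vertex have the same end.  Together with the facts that projection does
not increase distances and that geodesics lift to geodesics, this makes the covering
bijective on the vertices and edges of \<open>B(v', r/2)\<close>.\<close>

lemma flip_flip [simp]: "flip (flip d) = d"
  by (simp add: flip_def)

lemma fst_flip [simp]: "fst (flip d) = fst d"
  by (simp add: flip_def)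

lemma dstart_flip [simp]: "dstart X (flip d) = dend X d"
  by (simp add: dstart_def dend_def flip_def)

lemma dend_flip [simp]: "dend X (flip d) = dstart X d"
  by (simp add: dstart_def dend_def flip_def)

lemma rev_walk_Nil [simp]: "rev_walk [] = []"
  by (simp add: rev_walk_def)

lemma rev_walk_Cons [simp]: "rev_walk (d # W) = rev_walk W @ [flip d]"
  by (simp add: rev_walk_def)

lemma rev_walk_append [simp]: "rev_walk (A @ B) = rev_walk B @ rev_walk A"
  by (simp add: rev_walk_def)

lemma rev_walk_rev_walk [simp]: "rev_walk (rev_walk W) = W"
  by (simp add: rev_walk_def rev_map comp_def)

lemma length_rev_walk [simp]: "length (rev_walk W) = length W"
  by (simp add: rev_walk_def)

lemma walk_endpoints: "walk X x W y \<Longrightarrow> x \<in> gverts X \<and> y \<in> gverts X"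
  by (induction W arbitrary: x) auto

lemma walk_append: "walk X x (A @ B) y \<longleftrightarrow> (\<exists>m. walk X x A m \<and> walk X m B y)"
  by (induction A arbitrary: x) (auto dest: walk_endpoints)

lemma walk_rev_walk: "walk X x W y \<Longrightarrow> walk X y (rev_walk W) x"
  by (induction W arbitrary: x) (auto simp: walk_append dest: walk_endpoints)

fun reduced :: "'e dart list \<Rightarrow> bool" where
  "reduced (d # d' # R) \<longleftrightarrow> d' \<noteq> flip d \<and> reduced (d' # R)"
| "reduced _ \<longleftrightarrow> True"

lemma reduced_tl: "reduced (d # R) \<Longrightarrow> reduced R"
  by (cases R) auto

lemma reduced_reduce: "reduced (reduce W)"
  by (induction W) (auto split: list.split dest: reduced_tl)

lemma reduce_reduced: "reduced R \<Longrightarrow> reduce R = R"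
proof (induction R)
  case (Cons d R)
  then have "reduce R = R"
    using reduced_tl by blast
  with Cons.prems show ?case
    by (cases R) auto
qed simp

lemma reduce_reduce [simp]: "reduce (reduce W) = reduce W"
  by (rule reduce_reduced[OF reduced_reduce])

lemma reduce_Cons_reduce: "reduce (d # reduce W) = reduce (d # W)"
  by simp

lemma reduce_Cons_flip: "reduce (d # flip d # W) = reduce W"
  using reduced_reduce[of W] by (auto split: list.split)

lemma reduce_append_reduce: "reduce (a @ reduce b) = reduce (a @ b)"
  by (induction a) (simp, metis append_Cons reduce_Cons_reduce)

lemma reduce_cancel: "reduce (a @ d # flip d # b) = reduce (a @ b)"
  by (metis reduce_append_reduce reduce_Cons_flip)

lemma reduce_reduce_append: "reduce (reduce a @ b) = reduce (a @ b)"
proof (induction a)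
  case (Cons d a)
  have "reduce (reduce (d # a) @ b) = reduce (d # reduce a @ b)"
  proof (cases "reduce a")
    case (Cons d' R)
    show ?thesis
    proof (cases "d' = flip d")
      case True
      then have "reduce (d # a) = R"
        using Cons by simp
      then show ?thesis
        using Cons True reduce_Cons_flip[of d "R @ b"] by simp
    qed (use Cons in simp)
  qed simp
  also have "\<dots> = reduce (d # reduce (reduce a @ b))"
    by (simp only: reduce_Cons_reduce)
  also have "\<dots> = reduce ((d # a) @ b)"
    by (simp only: Cons.IH reduce_Cons_reduce append_Cons)
  finally show ?case .
qed simp

lemma reduce_append_reduce_reduce: "reduce (reduce a @ reduce b) = reduce (a @ b)"
  by (simp only: reduce_append_reduce reduce_reduce_append)

lemma reduce_cancel_walk: "reduce (a @ W @ rev_walk W @ b) = reduce (a @ b)"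
proof (induction W arbitrary: a b)
  case (Cons d W)
  have "reduce (a @ (d # W) @ rev_walk (d # W) @ b) = reduce ((a @ [d]) @ W @ rev_walk W @ flip d # b)"
    by simp
  also have "\<dots> = reduce (a @ d # flip d # b)"
    using Cons.IH[of "a @ [d]" "flip d # b"] by simp
  finally show ?case
    by (simp add: reduce_cancel)
qed simp

lemma reduce_conjugate_split:
  "reduce (W0 @ L1 @ L2 @ L3 @ rev_walk W0) =
   reduce (reduce (W0 @ L1 @ L2 @ rev_walk (W0 @ L1)) @ reduce (W0 @ L1 @ L3 @ rev_walk W0))"
proof -
  let ?U = "rev_walk (W0 @ L1)"
  have "reduce ((W0 @ L1 @ L2) @ ?U @ rev_walk ?U @ L3 @ rev_walk W0) =
        reduce ((W0 @ L1 @ L2) @ L3 @ rev_walk W0)"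
    by (rule reduce_cancel_walk)
  then show ?thesis
    by (simp add: reduce_append_reduce_reduce del: rev_walk_append)
qed

section \<open>Short closed walks are products of short cycles\<close>

lemma walk_split_at_repeated_start:
  assumes "walk X x L y" "\<not> distinct (map (dstart X) L)"
  obtains L1 L2 L3 m where "L = L1 @ L2 @ L3" "L2 \<noteq> []" "L3 \<noteq> []"
    "walk X x L1 m" "walk X m L2 m" "walk X m L3 y"
  using assms
proof (induction L arbitrary: x)
  case (Cons d L)
  show ?case
  proof (cases "distinct (map (dstart X) L)")
    case True
    with Cons.prems(2,3) obtain d' where "d' \<in> set L" "dstart X d' = x"
      by auto
    then obtain P S where "L = P @ d' # S"
      by (meson split_list)
    then show ?thesis
      using Cons.prems(1)[of "[]" "d # P" "d' # S" x] Cons.prems(2) \<open>dstart X d' = x\<close>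
      by (auto simp: walk_append)
  next
    case False
    show ?thesis
      using Cons.IH[OF _ _ False] Cons.prems(1)[of "d # _"] Cons.prems(2)
      by auto
  qed
qed simp

lemma distinct_edges_if_distinct_starts:
  assumes "walk X x L y" "distinct (map (dstart X) L)" "\<nexists>A d B. L = A @ d # flip d # B"
  shows "distinct (map fst L)"
  using assms
proof (induction L arbitrary: x)
  case (Cons d L)
  have "fst d' \<noteq> fst d" if d': "d' \<in> set L" for d'
  proof
    assume "fst d' = fst d"
    then consider "d' = d" | "d' = flip d"
      by (cases d; cases d') (auto simp: flip_def)
    then show False
    proof cases
      case 1
      then show False
        using Cons.prems(2) d' by auto
    next
      case 2
      then obtain d'' L' where L: "L = d'' # L'"
        using d' by (cases L) auto
      then have "dstart X d'' = dstart X d'"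
        using Cons.prems(1) 2 by simp
      then have "d'' = d'"
        using Cons.prems(2) d' L by (auto simp: distinct_map inj_on_eq_iff)
      then show False
        using Cons.prems(3) L 2 by blast
    qed
  qed
  moreover have "distinct (map fst L)"
    using Cons.IH[of "dend X d"] Cons.prems by (auto simp: Cons_eq_append_conv)
  ultimately show ?case
    by fastforce
qed simp

lemma short_closed_walk_in_pi1_r:
  assumes "walk G x0 W0 v" "walk G v L v" "length L \<le> r"
  shows "reduce (W0 @ L @ rev_walk W0) \<in> pi1_r G r x0"
  using assms
proof (induction "length L" arbitrary: L W0 v rule: less_induct)
  case less
  consider (empty) "L = []"
    | (backtrack) A d B where "L = A @ d # flip d # B"
    | (repeat) L1 L2 L3 m where "L = L1 @ L2 @ L3" "L2 \<noteq> []" "L3 \<noteq> []"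
        "walk G v L1 m" "walk G m L2 m" "walk G m L3 v"
    | (cycle) "once_around_cycle G v L"
    using walk_split_at_repeated_start[OF less.prems(2)]
      distinct_edges_if_distinct_starts[OF less.prems(2)] less.prems(2)
    unfolding once_around_cycle_def by blast
  then show ?case
  proof cases
    case empty
    then show ?thesis
      using reduce_cancel_walk[of "[]" W0 "[]"] gen_subgroup.one by (simp add: pi1_r_def)
  next
    case backtrack
    then have "reduce (W0 @ (A @ B) @ rev_walk W0) \<in> pi1_r G r x0"
      using less by (intro less.hyps[of "A @ B"]) (auto simp: walk_append)
    then show ?thesis
      using reduce_cancel[of "W0 @ A" d "B @ rev_walk W0"] backtrack by simp
  next
    case repeat
    have "reduce ((W0 @ L1) @ L2 @ rev_walk (W0 @ L1)) \<in> pi1_r G r x0"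
      using less repeat by (intro less.hyps[of L2]) (auto simp: walk_append)
    moreover have "reduce (W0 @ (L1 @ L3) @ rev_walk W0) \<in> pi1_r G r x0"
      using less repeat by (intro less.hyps[of "L1 @ L3"]) (auto simp: walk_append)
    ultimately show ?thesis
      using gen_subgroup.mult reduce_conjugate_split[of W0 L1 L2 L3] repeat(1)
      by (fastforce simp: pi1_r_def)
  next
    case cycle
    then have "W0 @ L @ rev_walk W0 \<in> local_gens G r x0"
      using less.prems unfolding local_gens_def by blast
    then show ?thesis
      unfolding pi1_r_def by (rule gen_subgroup.gen)
  qed
qed

section \<open>Lifting walks along a covering\<close>

lemma fst_map_dart [simp]: "fst (map_dart pe d) = pe (fst d)"
  by (simp add: map_dart_def)

lemma map_dart_flip: "map_dart pe (flip d) = flip (map_dart pe d)"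
  by (simp add: map_dart_def flip_def)

lemma map_map_dart_rev_walk: "map (map_dart pe) (rev_walk W) = rev_walk (map (map_dart pe) W)"
  by (simp add: rev_walk_def rev_map map_dart_flip comp_def)

locale graph_covering =
  fixes C :: "('cv, 'ce, 'x) graph_scheme" and G :: "('v, 'e, 'y) graph_scheme"
    and pv :: "'cv \<Rightarrow> 'v" and pe :: "'ce \<Rightarrow> 'e"
  assumes wf_cover: "wf_graph C" and covering: "covering C G pv pe"
begin

lemma pv_in_gverts: "c \<in> gverts C \<Longrightarrow> pv c \<in> gverts G"
  using covering unfolding covering_def by blast

lemma pe_in_gedges: "e \<in> gedges C \<Longrightarrow> pe e \<in> gedges G"
  using covering unfolding covering_def by blast

lemma pv_gsrc: "e \<in> gedges C \<Longrightarrow> pv (gsrc C e) = gsrc G (pe e)"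
  using covering unfolding covering_def by blast

lemma pv_gtgt: "e \<in> gedges C \<Longrightarrow> pv (gtgt C e) = gtgt G (pe e)"
  using covering unfolding covering_def by blast

lemma bij_betw_darts_at: "c \<in> gverts C \<Longrightarrow> bij_betw (map_dart pe) (darts_at C c) (darts_at G (pv c))"
  using covering unfolding covering_def by blast

lemma dart_lift_unique:
  "\<lbrakk>c \<in> gverts C; d1 \<in> darts_at C c; d2 \<in> darts_at C c; map_dart pe d1 = map_dart pe d2\<rbrakk> \<Longrightarrow> d1 = d2"
  using bij_betw_darts_at unfolding bij_betw_def inj_on_def by blast

lemma dart_lift_exists:
  assumes "c \<in> gverts C" "d \<in> darts_at G (pv c)"
  obtains d' where "d' \<in> darts_at C c" "map_dart pe d' = d"
  using assms bij_betw_darts_at[OF assms(1)] unfolding bij_betw_def by (metis imageE)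

lemma dstart_map_dart: "fst d \<in> gedges C \<Longrightarrow> dstart G (map_dart pe d) = pv (dstart C d)"
  by (simp add: dstart_def map_dart_def pv_gsrc pv_gtgt)

lemma dend_map_dart: "fst d \<in> gedges C \<Longrightarrow> dend G (map_dart pe d) = pv (dend C d)"
  by (simp add: dend_def map_dart_def pv_gsrc pv_gtgt)

lemma dend_in_gverts: "fst d \<in> gedges C \<Longrightarrow> dend C d \<in> gverts C"
  using wf_cover by (auto simp: wf_graph_def dend_def)

lemma walk_project: "walk C c W c' \<Longrightarrow> walk G (pv c) (map (map_dart pe) W) (pv c')"
  by (induction W arbitrary: c)
    (auto simp: pv_in_gverts dstart_map_dart dend_map_dart pe_in_gedges)

lemma walk_lift_unique:
  "\<lbrakk>walk C c U1 c1; walk C c U2 c2; map (map_dart pe) U1 = map (map_dart pe) U2\<rbrakk>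
   \<Longrightarrow> U1 = U2 \<and> c1 = c2"
proof (induction U1 arbitrary: c U2)
  case (Cons d1 U1)
  then obtain d2 U2' where U2: "U2 = d2 # U2'"
    by (cases U2) auto
  then have "d1 = d2"
    using Cons.prems by (intro dart_lift_unique[of c]) (auto simp: darts_at_def)
  then show ?case
    using Cons U2 by auto
qed auto

lemma walk_lift_exists:
  assumes "c \<in> gverts C" "walk G (pv c) U y"
  obtains U' c' where "walk C c U' c'" "map (map_dart pe) U' = U" "pv c' = y"
  using assms
proof (induction U arbitrary: c thesis)
  case (Cons d U)
  then have "d \<in> darts_at G (pv c)"
    by (simp add: darts_at_def)
  then obtain d' where d': "d' \<in> darts_at C c" "map_dart pe d' = d"
    using dart_lift_exists Cons.prems(2) by blast
  have e: "fst d' \<in> gedges C"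
    using d'(1) by (simp add: darts_at_def)
  then have "walk G (pv (dend C d')) U y"
    using dend_map_dart[OF e] d'(2) Cons.prems(3) by auto
  then obtain U' c' where "walk C (dend C d') U' c'" "map (map_dart pe) U' = U" "pv c' = y"
    using Cons.IH dend_in_gverts[OF e] by blast
  then show ?case
    using Cons.prems(1)[of "d' # U'" c'] Cons.prems(2) d' by (auto simp: darts_at_def)
qed auto

text \<open>Free reduction of a projected walk can be performed upstairs: a backtrack downstairs
lifts to a backtrack, by uniqueness of dart lifts.\<close>

lemma walk_lift_reduce:
  assumes "walk C c W c'"
  obtains R where "walk C c R c'" "map (map_dart pe) R = reduce (map (map_dart pe) W)"
  using assms
proof (induction W arbitrary: c thesis)
  case (Cons d W)
  have d: "fst d \<in> gedges C" "dstart C d = c" "c \<in> gverts C" and W: "walk C (dend C d) W c'"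
    using Cons.prems(2) by auto
  obtain R where R: "walk C (dend C d) R c'" "reduce (map (map_dart pe) W) = map (map_dart pe) R"
    using Cons.IH[OF _ W] by metis
  show ?case
  proof (cases R)
    case Nil
    then show ?thesis
      using Cons.prems(1)[of "[d]"] R d by auto
  next
    case (Cons d' R')
    show ?thesis
    proof (cases "map_dart pe d' = flip (map_dart pe d)")
      case True
      then have "d' = flip d"
        using R d Cons dend_in_gverts
        by (intro dart_lift_unique[of "dend C d"]) (auto simp: darts_at_def map_dart_flip)
      then show ?thesis
        using Cons.prems(1)[of R'] R d Cons True by auto
    next
      case False
      then show ?thesis
        using Cons.prems(1)[of "d # R"] R d Cons by auto
    qed
  qed
qed auto

text \<open>With \<open>B\<close> the lift from \<open>z\<close> of the reversed projection of \<open>A\<close>, the walk \<open>A L B\<close>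
has the same reduced projection as a closed walk at \<open>c0\<close>, so by uniqueness of lifts it
returns to \<open>c0\<close>.  Then the reverse of \<open>B\<close> lifts the projection of \<open>A\<close> from \<open>c0\<close>,
hence is \<open>A\<close>, and \<open>z\<close> is its end \<open>v'\<close>.\<close>

lemma lift_closed_if_in_induced_subgroup:
  assumes A: "walk C c0 A v'" and L: "walk C v' L z" and "pv z = pv v'"
    and "reduce (map (map_dart pe) (A @ L) @ rev_walk (map (map_dart pe) A))
           \<in> induced_subgroup C pe c0"
  shows "z = v'"
proof -
  let ?p = "map (map_dart pe)"
  obtain W where W: "walk C c0 W c0" "reduce (?p (A @ L) @ rev_walk (?p A)) = reduce (?p W)"
    using assms(4) unfolding induced_subgroup_def by auto
  have "walk G (pv z) (rev_walk (?p A)) (pv c0)"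
    using walk_rev_walk[OF walk_project[OF A]] assms(3) by simp
  then obtain B w where B: "walk C z B w" "?p B = rev_walk (?p A)"
    using walk_lift_exists walk_endpoints[OF L] by metis
  have "walk C c0 (A @ L @ B) w"
    using A L B(1) by (auto simp: walk_append)
  then obtain R where R: "walk C c0 R w" "?p R = reduce (?p (A @ L) @ rev_walk (?p A))"
    using walk_lift_reduce B(2) by (metis append_assoc map_append)
  obtain R' where R': "walk C c0 R' c0" "?p R' = reduce (?p W)"
    using walk_lift_reduce[OF W(1)] by blast
  have "w = c0"
    using walk_lift_unique[OF R(1) R'(1)] R(2) R'(2) W(2) by simp
  then have "walk C c0 (rev_walk B) z"
    using walk_rev_walk[OF B(1)] by simp
  moreover have "?p (rev_walk B) = ?p A"
    using B(2) by (simp add: map_map_dart_rev_walk)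
  ultimately show "z = v'"
    using walk_lift_unique[OF _ A] by blast
qed

lemma short_closed_walk_lifts_closed:
  assumes "connected_graph C" "c0 \<in> gverts C" "pi1_r G r (pv c0) \<subseteq> induced_subgroup C pe c0"
    and "v' \<in> gverts C" "walk C v' L z" "pv z = pv v'" "length L \<le> r"
  shows "z = v'"
proof -
  let ?p = "map (map_dart pe)"
  obtain A where A: "walk C c0 A v'"
    using assms(1,2,4) unfolding connected_graph_def by blast
  have "walk G (pv v') (?p L) (pv v')"
    using walk_project[OF assms(5)] assms(6) by simp
  then have "reduce (?p A @ ?p L @ rev_walk (?p A)) \<in> pi1_r G r (pv c0)"
    using short_closed_walk_in_pi1_r[OF walk_project[OF A]] assms(7) by simp
  then show ?thesis
    using lift_closed_if_in_induced_subgroup[OF A assms(5,6)] assms(3) by auto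
qed

end

lemma walk_edge_forward: "wf_graph X \<Longrightarrow> e \<in> gedges X \<Longrightarrow> walk X (gsrc X e) [(e, True)] (gtgt X e)"
  by (simp add: wf_graph_def dstart_def dend_def)

lemma walk_edge_backward: "wf_graph X \<Longrightarrow> e \<in> gedges X \<Longrightarrow> walk X (gtgt X e) [(e, False)] (gsrc X e)"
  by (simp add: wf_graph_def dstart_def dend_def)

lemma gdist_le: "walk X u W v \<Longrightarrow> gdist X u v \<le> length W"
  unfolding gdist_def by (rule Least_le) blast

lemma exists_geodesic:
  assumes "connected_graph X" "u \<in> gverts X" "v \<in> gverts X"
  obtains W where "walk X u W v" "length W = gdist X u v"
proof -
  obtain W where "walk X u W v"
    using assms unfolding connected_graph_def by blast
  then show ?thesis
    using that LeastI_ex[of "\<lambda>n. \<exists>W. walk X u W v \<and> length W = n"] unfolding gdist_def by blast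
qed

lemma gdist_sym:
  assumes "connected_graph X" "u \<in> gverts X" "v \<in> gverts X"
  shows "gdist X u v = gdist X v u"
proof -
  have "gdist X y x \<le> gdist X x y" if "x \<in> gverts X" "y \<in> gverts X" for x y
    using exists_geodesic[OF assms(1) that] gdist_le walk_rev_walk by (metis length_rev_walk)
  then show ?thesis
    using assms(2,3) by (simp add: order_antisym)
qed

lemma gdist_triangle:
  assumes "connected_graph X" "v \<in> gverts X" "walk X x W y"
  shows "gdist X v y \<le> gdist X v x + length W"
proof -
  obtain P where "walk X v P x" "length P = gdist X v x"
    using exists_geodesic[OF assms(1,2)] walk_endpoints[OF assms(3)] by blast
  then show ?thesis
    using gdist_le[of X v "P @ W" y] assms(3) by (auto simp: walk_append)
qed

lemma gverts_ball: "gverts (ball X v \<rho>) = {x \<in> gverts X. 2 * gdist X v x \<le> \<rho>}"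
  by (simp add: ball_def)

lemma gedges_ball:
  assumes "connected_graph X" "wf_graph X" "v \<in> gverts X"
  shows "gedges (ball X v \<rho>) =
    {e \<in> gedges X. gdist X v (gsrc X e) + 1 + gdist X v (gtgt X e) \<le> \<rho>}"
  using assms gdist_sym[OF assms(1) _ assms(3)] by (auto simp: ball_def wf_graph_def)

lemma gsrc_in_ball:
  assumes "connected_graph X" "wf_graph X" "v \<in> gverts X" "e \<in> gedges (ball X v \<rho>)"
  shows "gsrc X e \<in> gverts (ball X v \<rho>)"
proof -
  have "e \<in> gedges X" "gdist X v (gsrc X e) + 1 + gdist X v (gtgt X e) \<le> \<rho>"
    using assms(4) gedges_ball[OF assms(1-3)] by auto
  moreover have "gdist X v (gsrc X e) \<le> gdist X v (gtgt X e) + 1"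
    using gdist_triangle[OF assms(1,3) walk_edge_backward[OF assms(2)]] calculation(1) by simp
  ultimately show ?thesis
    using assms(2) by (auto simp: gverts_ball wf_graph_def)
qed

section \<open>Coverings in which short closed walks lift to closed walks\<close>

locale short_loop_lifting_covering = graph_covering C G pv pe
  for C :: "('cv, 'ce, 'x) graph_scheme" and G :: "('v, 'e, 'y) graph_scheme" and pv pe +
  fixes r :: nat
  assumes wf_base: "wf_graph G"
    and connected_cover: "connected_graph C" and connected_base: "connected_graph G"
    and short_closed_walks_lift_closed:
      "\<lbrakk>v' \<in> gverts C; walk C v' L z; pv z = pv v'; length L \<le> r\<rbrakk> \<Longrightarrow> z = v'"
begin

lemma gdist_project_le:
  assumes "v' \<in> gverts C" "x' \<in> gverts C"
  shows "gdist G (pv v') (pv x') \<le> gdist C v' x'"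
  using exists_geodesic[OF connected_cover assms] walk_project gdist_le by (metis length_map)

lemma exists_lift_gdist_eq:
  assumes "v' \<in> gverts C" "x \<in> gverts G"
  obtains x' where "x' \<in> gverts C" "pv x' = x" "gdist C v' x' = gdist G (pv v') x"
proof -
  obtain W where W: "walk G (pv v') W x" "length W = gdist G (pv v') x"
    using exists_geodesic[OF connected_base pv_in_gverts[OF assms(1)] assms(2)] by blast
  then obtain W' x' where W': "walk C v' W' x'" "map (map_dart pe) W' = W" "pv x' = x"
    using walk_lift_exists[OF assms(1)] by blast
  then have "x' \<in> gverts C"
    using walk_endpoints by metis
  moreover have "gdist C v' x' \<le> gdist G (pv v') x"
    using gdist_le[OF W'(1)] W'(2) W(2) by auto
  ultimately show ?thesis
    using that gdist_project_le[OF assms(1)] W'(3) by (metis order_antisym)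
qed

text \<open>Go from \<open>v'\<close> to \<open>x'\<close> along a geodesic and return along the lift of the
reversed projection of a geodesic to \<open>y'\<close>: this closed lift has length at most
\<open>r\<close>, so its second half is the reversed geodesic to \<open>y'\<close>.\<close>

lemma lift_eq_if_gdist_sum_le:
  assumes "v' \<in> gverts C" "x' \<in> gverts C" "y' \<in> gverts C" "pv x' = pv y'"
    and "gdist C v' x' + gdist C v' y' \<le> r"
  shows "x' = y'"
proof -
  let ?p = "map (map_dart pe)"
  obtain P where P: "walk C v' P x'" "length P = gdist C v' x'"
    using exists_geodesic[OF connected_cover assms(1,2)] by blast
  obtain Q where Q: "walk C v' Q y'" "length Q = gdist C v' y'"
    using exists_geodesic[OF connected_cover assms(1,3)] by blast
  have "walk G (pv x') (rev_walk (?p Q)) (pv v')"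
    using walk_rev_walk[OF walk_project[OF Q(1)]] assms(4) by simp
  then obtain B z where B: "walk C x' B z" "?p B = rev_walk (?p Q)" "pv z = pv v'"
    using walk_lift_exists[OF assms(2)] by blast
  have "length B = length Q"
    using arg_cong[OF B(2), of length] by simp
  then have "z = v'"
    using short_closed_walks_lift_closed[OF assms(1) _ B(3), of "P @ B"] P Q B(1) assms(5)
    by (auto simp: walk_append)
  then have "walk C v' (rev_walk B) x'"
    using walk_rev_walk[OF B(1)] by simp
  moreover have "?p (rev_walk B) = ?p Q"
    using B(2) by (simp add: map_map_dart_rev_walk)
  ultimately show ?thesis
    using walk_lift_unique[OF _ Q(1)] by blast
qed


lemma bij_betw_ball_gverts:
  assumes "v' \<in> gverts C"
  shows "bij_betw pv (gverts (ball C v' r)) (gverts (ball G (pv v') r))"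
proof (rule bij_betw_imageI)
  show "inj_on pv (gverts (ball C v' r))"
    using lift_eq_if_gdist_sum_le[OF assms] by (auto simp: gverts_ball intro: inj_onI)
  show "pv ` gverts (ball C v' r) = gverts (ball G (pv v') r)"
  proof
    show "pv ` gverts (ball C v' r) \<subseteq> gverts (ball G (pv v') r)"
    proof (rule image_subsetI)
      fix x'
      assume "x' \<in> gverts (ball C v' r)"
      then show "pv x' \<in> gverts (ball G (pv v') r)"
        using gdist_project_le[OF assms, of x'] pv_in_gverts[of x'] by (simp add: gverts_ball)
    qed
    show "gverts (ball G (pv v') r) \<subseteq> pv ` gverts (ball C v' r)"
    proof
      fix x
      assume x: "x \<in> gverts (ball G (pv v') r)"
      then have "x \<in> gverts G"
        by (simp add: gverts_ball)
      then obtain x' where "x' \<in> gverts C" "pv x' = x" "gdist C v' x' = gdist G (pv v') x"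
        using exists_lift_gdist_eq[OF assms] by blast
      then show "x \<in> pv ` gverts (ball C v' r)"
        using x by (auto simp: gverts_ball)
    qed
  qed
qed

lemma inj_on_ball_gedges:
  assumes "v' \<in> gverts C"
  shows "inj_on pe (gedges (ball C v' r))"
proof (rule inj_onI)
  fix e1 e2
  assume e: "e1 \<in> gedges (ball C v' r)" "e2 \<in> gedges (ball C v' r)" and "pe e1 = pe e2"
  have C: "e1 \<in> gedges C" "e2 \<in> gedges C"
    using e by (auto simp: ball_def)
  have "pv (gsrc C e1) = pv (gsrc C e2)"
    using pv_gsrc C \<open>pe e1 = pe e2\<close> by simp
  then have "gsrc C e1 = gsrc C e2"
    using bij_betw_ball_gverts[OF assms] gsrc_in_ball[OF connected_cover wf_cover assms] e
    unfolding bij_betw_def inj_on_def by blast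
  then show "e1 = e2"
    using dart_lift_unique[of "gsrc C e1" "(e1, True)" "(e2, True)"] C \<open>pe e1 = pe e2\<close> wf_cover
    by (auto simp: darts_at_def dstart_def map_dart_def wf_graph_def)
qed

lemma image_ball_gedges:
  assumes "v' \<in> gverts C"
  shows "pe ` gedges (ball C v' r) = gedges (ball G (pv v') r)"
proof
  note ball_C = gedges_ball[OF connected_cover wf_cover assms]
  note ball_G = gedges_ball[OF connected_base wf_base pv_in_gverts[OF assms]]
  have wf_C: "gsrc C e \<in> gverts C" "gtgt C e \<in> gverts C" if "e \<in> gedges C" for e
    using wf_cover that by (auto simp: wf_graph_def)
  show "pe ` gedges (ball C v' r) \<subseteq> gedges (ball G (pv v') r)"
  proof (rule image_subsetI)
    fix e'
    assume "e' \<in> gedges (ball C v' r)"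
    then have e': "e' \<in> gedges C" "gdist C v' (gsrc C e') + 1 + gdist C v' (gtgt C e') \<le> r"
      using ball_C by auto
    then show "pe e' \<in> gedges (ball G (pv v') r)"
      using gdist_project_le[OF assms wf_C(1)[OF e'(1)]] gdist_project_le[OF assms wf_C(2)[OF e'(1)]]
      by (simp add: ball_G pe_in_gedges pv_gsrc[symmetric] pv_gtgt[symmetric])
  qed
  show "gedges (ball G (pv v') r) \<subseteq> pe ` gedges (ball C v' r)"
  proof
    fix e
    assume "e \<in> gedges (ball G (pv v') r)"
    then have e: "e \<in> gedges G" "gdist G (pv v') (gsrc G e) + 1 + gdist G (pv v') (gtgt G e) \<le> r"
      using ball_G by auto
    have "gsrc G e \<in> gverts G" "gtgt G e \<in> gverts G"
      using wf_base e(1) by (auto simp: wf_graph_def)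
    then obtain s' t' where
      s': "s' \<in> gverts C" "pv s' = gsrc G e" "gdist C v' s' = gdist G (pv v') (gsrc G e)" and
      t': "t' \<in> gverts C" "pv t' = gtgt G e" "gdist C v' t' = gdist G (pv v') (gtgt G e)"
      using exists_lift_gdist_eq[OF assms] by metis
    have "(e, True) \<in> darts_at G (pv s')"
      using e(1) s'(2) by (simp add: darts_at_def dstart_def)
    then obtain d' where d': "d' \<in> darts_at C s'" "map_dart pe d' = (e, True)"
      using dart_lift_exists[OF s'(1)] by blast
    then obtain e' where e': "d' = (e', True)" "pe e' = e" "e' \<in> gedges C" "gsrc C e' = s'"
      by (cases d') (auto simp: map_dart_def darts_at_def dstart_def)
    have "gdist C v' (gtgt C e') \<le> gdist C v' s' + 1"
      using gdist_triangle[OF connected_cover assms walk_edge_forward[OF wf_cover e'(3)]] e'(4) by simp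
    then have "gtgt C e' = t'"
      using lift_eq_if_gdist_sum_le[OF assms wf_C(2)[OF e'(3)] t'(1)] pv_gtgt[OF e'(3)] e' e(2) s' t'
      by simp
    then have "e' \<in> gedges (ball C v' r)"
      using ball_C e' e(2) s'(3) t'(3) by simp
    then show "e \<in> pe ` gedges (ball C v' r)"
      using e'(2) by blast
  qed
qed

lemma preserves_balls: "preserves_balls C G pv pe r"
  unfolding preserves_balls_def
proof (intro ballI impI)
  fix v v'
  assume "v \<in> gverts G" "v' \<in> gverts C" "pv v' = v"
  moreover have "\<forall>e \<in> gedges (ball C v' r).
      pv (gsrc (ball C v' r) e) = gsrc (ball G v r) (pe e) \<and>
      pv (gtgt (ball C v' r) e) = gtgt (ball G v r) (pe e)"
    by (simp add: ball_def pv_gsrc pv_gtgt)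
  ultimately show "graph_iso (ball C v' r) (ball G v r) pv pe"
    using bij_betw_ball_gverts inj_on_ball_gedges image_ball_gedges
    unfolding graph_iso_def bij_betw_def by blast
qed

end

theorem lemma4p3:
  fixes G :: "('v, 'e) graph" and C :: "('cv, 'ce) graph"
    and pv :: "'cv \<Rightarrow> 'v" and pe :: "'ce \<Rightarrow> 'e" and r :: nat
  assumes "wf_graph G" and "connected_graph G"
    and "x0 \<in> gverts G"
    and "wf_graph C" and "connected_graph C"
    and "covering C G pv pe"
    and "c0 \<in> gverts C" and "pv c0 = x0"
    and "induced_subgroup C pe c0 = pi1_r G r x0"
  shows "preserves_balls C G pv pe r"
proof -
  interpret graph_covering C G pv pe
    using assms by unfold_locales
  interpret short_loop_lifting_covering C G pv pe r
  proof unfold_locales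
    show "z = v'" if "v' \<in> gverts C" "walk C v' L z" "pv z = pv v'" "length L \<le> r" for v' L z
      using short_closed_walk_lifts_closed[OF assms(5,7) _ that] assms(8,9) by simp
  qed (use assms in auto)
  show ?thesis
    by (rule preserves_balls)
qed

end
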